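(* Let $Y$ be a real Hilbert space, let $Q\colon Y\to Y$ be a bounded linear operator, let $\lambda>0$, and suppose that $\langle y, Qy\rangle+\lambda\|y\|^2\le 0$ for all $y\in Y$. Then $Q$ touches every maximally monotone multifunction on $Y$; that is, for every maximally monotone $M\colon Y\rightrightarrows Y$, the set $G(M)\cap G(Q)$ is a singleton in $Y\times Y$.
   Context: For a multifunction (or function) $M$ on $Y$, $G(M)=\{(y,q)\in Y\times Y: q\in My\}$ denotes its graph. Two multifunctions $M,Q$ on $Y$ are said to touch if $G(M)\cap G(Q)$ is a singleton. *)

theory Defs
  imports "HOL-Analysis.Analysis"
begin

text \<open>Multifunctions on Y are modelled as set-valued maps 'a \<Rightarrow> 'a set.
  A real Hilbert space is a type of class real_inner and complete_space.\<close>

definition graph :: "('a \<Rightarrow> 'a set) \<Rightarrow> ('a \<times> 'a) set" where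
  "graph M = {(y, q). q \<in> M y}"

definition monotone_set :: "('a::real_inner \<times> 'a) set \<Rightarrow> bool" where
  "monotone_set G \<longleftrightarrow>
     (\<forall>(x, u) \<in> G. \<forall>(y, v) \<in> G. (x - y) \<bullet> (u - v) \<ge> 0)"

definition monotone_mf :: "('a::real_inner \<Rightarrow> 'a set) \<Rightarrow> bool" where
  "monotone_mf M \<longleftrightarrow> monotone_set (graph M)"

definition maximally_monotone :: "('a::real_inner \<Rightarrow> 'a set) \<Rightarrow> bool" where
  "maximally_monotone M \<longleftrightarrow> monotone_mf M \<and>
     (\<forall>N. monotone_mf N \<and> graph M \<subseteq> graph N \<longrightarrow> graph N = graph M)"

end

theory Submission
  imports Defs
begin

(* For small gamma > 0 the map y |-> y + gamma Q y is a contraction, since <y, Q y> <= -lam |y|^2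
   and Q is bounded. By Minty's theorem the resolvent (I + gamma M)^-1 is defined everywhere, and
   monotonicity makes it nonexpansive; so y |-> (I + gamma M)^-1 (y + gamma Q y) is a contraction,
   and its fixed point y satisfies Q y : M y. Two such points y, y' would give
   0 <= <y - y', Q y - Q y'> <= -lam |y - y'|^2, hence uniqueness.

   Minty's theorem is proved with the Fitzpatrick function F of M: F(x, u) >= <x, u>, with
   equality on G(M), and F is convex and lower semicontinuous. Hence F + |.|^2/2 is nonnegative
   and strongly convex, so it attains its minimum at some (x0, u0), and the first-order condition
   there shows (-u0, -x0) : G(M) and x0 + u0 = 0. *)

section \<open>Maximal monotone sets of pairs\<close>

definition maximal_monotone_set :: "('a::real_inner \<times> 'a) set \<Rightarrow> bool" where
  "maximal_monotone_set S \<longleftrightarrow> monotone_set S \<and>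
     (\<forall>x u. (\<forall>(y, v) \<in> S. 0 \<le> (x - y) \<bullet> (u - v)) \<longrightarrow> (x, u) \<in> S)"

lemma monotone_setD:
  assumes "monotone_set S" "(x, u) \<in> S" "(y, v) \<in> S"
  shows "0 \<le> (x - y) \<bullet> (u - v)"
  using assms unfolding monotone_set_def by fast

lemma maximal_monotone_set_imp_monotone_set:
  "maximal_monotone_set S \<Longrightarrow> monotone_set S"
  unfolding maximal_monotone_set_def by simp

lemma maximal_monotone_setD:
  assumes "maximal_monotone_set S" "\<And>y v. (y, v) \<in> S \<Longrightarrow> 0 \<le> (x - y) \<bullet> (u - v)"
  shows "(x, u) \<in> S"
  using assms unfolding maximal_monotone_set_def by blast

lemma maximal_monotone_set_nonempty:
  "maximal_monotone_set S \<Longrightarrow> S \<noteq> {}"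
  using maximal_monotone_setD[of S 0 0] by auto

lemma maximal_monotone_set_graph:
  assumes "maximally_monotone M"
  shows "maximal_monotone_set (graph M)"
  unfolding maximal_monotone_set_def
proof (intro conjI allI impI)
  show mono: "monotone_set (graph M)"
    using assms unfolding maximally_monotone_def monotone_mf_def by simp
  fix x u
  assume related: "\<forall>(y, v) \<in> graph M. 0 \<le> (x - y) \<bullet> (u - v)"
  define N where "N y = {q. (y, q) \<in> insert (x, u) (graph M)}" for y
  have graph_N: "graph N = insert (x, u) (graph M)"
    unfolding N_def graph_def by auto
  have "monotone_set (graph N)"
    unfolding monotone_set_def graph_N
  proof (intro ballI, clarify)
    fix a b c d
    assume "(a, b) \<in> insert (x, u) (graph M)" "(c, d) \<in> insert (x, u) (graph M)"
    moreover have "(c - a) \<bullet> (d - b) = (a - c) \<bullet> (b - d)"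
      by (simp add: inner_diff)
    ultimately show "0 \<le> (a - c) \<bullet> (b - d)"
      using related mono by (auto dest: monotone_setD)
  qed
  then have "graph N = graph M"
    using assms graph_N unfolding maximally_monotone_def monotone_mf_def by blast
  then show "(x, u) \<in> graph M"
    using graph_N by blast
qed

lemma maximal_monotone_set_shift_scale:
  fixes S :: "('a::real_inner \<times> 'a) set"
  assumes S: "maximal_monotone_set S" and "0 < \<gamma>"
  shows "maximal_monotone_set ((\<lambda>(x, u). (x - w, \<gamma> *\<^sub>R u)) ` S)"
  unfolding maximal_monotone_set_def
proof (intro conjI allI impI)
  show "monotone_set ((\<lambda>(x, u). (x - w, \<gamma> *\<^sub>R u)) ` S)"
    unfolding monotone_set_def
    using \<open>0 < \<gamma>\<close> monotone_setD[OF maximal_monotone_set_imp_monotone_set[OF S]]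
    by (auto simp: scaleR_diff_right[symmetric])
  fix p q
  assume related: "\<forall>(y, v) \<in> (\<lambda>(x, u). (x - w, \<gamma> *\<^sub>R u)) ` S. 0 \<le> (p - y) \<bullet> (q - v)"
  have "(p + w, q /\<^sub>R \<gamma>) \<in> S"
  proof (rule maximal_monotone_setD[OF S])
    fix y v
    assume "(y, v) \<in> S"
    then have "0 \<le> (p - (y - w)) \<bullet> (q - \<gamma> *\<^sub>R v)"
      using related by force
    also have "\<dots> = (p + w - y) \<bullet> (\<gamma> *\<^sub>R (q /\<^sub>R \<gamma> - v))"
      using \<open>0 < \<gamma>\<close> by (simp add: algebra_simps)
    also have "\<dots> = \<gamma> * ((p + w - y) \<bullet> (q /\<^sub>R \<gamma> - v))"
      by simp
    finally show "0 \<le> (p + w - y) \<bullet> (q /\<^sub>R \<gamma> - v)"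
      using \<open>0 < \<gamma>\<close> by (simp add: zero_le_mult_iff)
  qed
  then show "(p, q) \<in> (\<lambda>(x, u). (x - w, \<gamma> *\<^sub>R u)) ` S"
    using \<open>0 < \<gamma>\<close> by (auto intro!: image_eqI[of _ _ "(p + w, q /\<^sub>R \<gamma>)"])
qed

section \<open>The Fitzpatrick function\<close>

definition fitzpatrick_pairing :: "'a::real_inner \<times> 'a \<Rightarrow> 'a \<times> 'a \<Rightarrow> real" where
  "fitzpatrick_pairing z p = fst z \<bullet> snd p + fst p \<bullet> snd z - fst p \<bullet> snd p"

text \<open>The Fitzpatrick function is real-valued here: outside \<open>fitzpatrick_dom S\<close>, where the
  supremum is infinite, \<open>fitzpatrick S z\<close> is a junk value.\<close>

definition fitzpatrick_dom :: "('a::real_inner \<times> 'a) set \<Rightarrow> ('a \<times> 'a) set" where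
  "fitzpatrick_dom S = {z. bdd_above (fitzpatrick_pairing z ` S)}"

definition fitzpatrick :: "('a::real_inner \<times> 'a) set \<Rightarrow> 'a \<times> 'a \<Rightarrow> real" where
  "fitzpatrick S z = Sup (fitzpatrick_pairing z ` S)"

lemma fitzpatrick_pairing_eq:
  "fitzpatrick_pairing z p = fst z \<bullet> snd z - (fst z - fst p) \<bullet> (snd z - snd p)"
  unfolding fitzpatrick_pairing_def by (simp add: inner_diff_left inner_diff_right inner_commute)

lemma fitzpatrick_pairing_convex_combination:
  "fitzpatrick_pairing ((1 - t) *\<^sub>R a + t *\<^sub>R b) p =
     (1 - t) * fitzpatrick_pairing a p + t * fitzpatrick_pairing b p"
  unfolding fitzpatrick_pairing_def by (simp add: algebra_simps)

lemma fitzpatrick_upper: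
  "z \<in> fitzpatrick_dom S \<Longrightarrow> p \<in> S \<Longrightarrow> fitzpatrick_pairing z p \<le> fitzpatrick S z"
  unfolding fitzpatrick_dom_def fitzpatrick_def by (auto intro: cSup_upper)

lemma fitzpatrick_least:
  assumes "S \<noteq> {}" "\<And>p. p \<in> S \<Longrightarrow> fitzpatrick_pairing z p \<le> c"
  shows "z \<in> fitzpatrick_dom S \<and> fitzpatrick S z \<le> c"
  using assms unfolding fitzpatrick_dom_def fitzpatrick_def
  by (auto intro!: bdd_aboveI2 cSup_least)

lemma fitzpatrick_le_inner:
  assumes "monotone_set S" "p \<in> S"
  shows "p \<in> fitzpatrick_dom S \<and> fitzpatrick S p \<le> fst p \<bullet> snd p"
proof (rule fitzpatrick_least)
  fix q
  assume "q \<in> S"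
  then show "fitzpatrick_pairing p q \<le> fst p \<bullet> snd p"
    using assms monotone_setD[of S "fst p" "snd p" "fst q" "snd q"]
    by (simp add: fitzpatrick_pairing_eq)
qed (use assms in blast)

lemma fitzpatrick_ge_inner:
  assumes "maximal_monotone_set S" "z \<in> fitzpatrick_dom S"
  shows "fst z \<bullet> snd z \<le> fitzpatrick S z"
proof (cases "z \<in> S")
  case True
  then show ?thesis
    using fitzpatrick_upper[OF assms(2), of z] by (simp add: fitzpatrick_pairing_eq)
next
  case False
  then obtain y v where "(y, v) \<in> S" "(fst z - y) \<bullet> (snd z - v) < 0"
    using maximal_monotone_setD[OF assms(1), of "fst z" "snd z"] by force
  then show ?thesis
    using fitzpatrick_upper[OF assms(2)] by (force simp: fitzpatrick_pairing_eq)
qed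

lemma fitzpatrick_convex:
  assumes "S \<noteq> {}" "a \<in> fitzpatrick_dom S" "b \<in> fitzpatrick_dom S" "0 \<le> t" "t \<le> 1"
  shows "(1 - t) *\<^sub>R a + t *\<^sub>R b \<in> fitzpatrick_dom S \<and>
    fitzpatrick S ((1 - t) *\<^sub>R a + t *\<^sub>R b) \<le> (1 - t) * fitzpatrick S a + t * fitzpatrick S b"
proof (rule fitzpatrick_least[OF assms(1)])
  fix p
  assume "p \<in> S"
  then have "(1 - t) * fitzpatrick_pairing a p \<le> (1 - t) * fitzpatrick S a"
    and "t * fitzpatrick_pairing b p \<le> t * fitzpatrick S b"
    using assms fitzpatrick_upper[of _ S p] by (simp_all add: mult_left_mono)
  then show "fitzpatrick_pairing ((1 - t) *\<^sub>R a + t *\<^sub>R b) p \<le>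
      (1 - t) * fitzpatrick S a + t * fitzpatrick S b"
    unfolding fitzpatrick_pairing_convex_combination by linarith
qed

lemma fitzpatrick_lower_semicontinuous:
  assumes "S \<noteq> {}" "\<And>n. zs n \<in> fitzpatrick_dom S" "zs \<longlonglongrightarrow> z"
    and "(\<lambda>n. fitzpatrick S (zs n)) \<longlonglongrightarrow> c"
  shows "z \<in> fitzpatrick_dom S \<and> fitzpatrick S z \<le> c"
proof (rule fitzpatrick_least[OF assms(1)])
  fix p
  assume "p \<in> S"
  have "(\<lambda>n. fitzpatrick_pairing (zs n) p) \<longlonglongrightarrow> fitzpatrick_pairing z p"
    unfolding fitzpatrick_pairing_def by (intro tendsto_intros assms(3))
  then show "fitzpatrick_pairing z p \<le> c"
    using assms(4) fitzpatrick_upper[OF assms(2) \<open>p \<in> S\<close>] by (intro LIMSEQ_le) auto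
qed

section \<open>Minty's theorem\<close>

lemma Cauchy_if_norm_diff_sq_le:
  fixes zs :: "nat \<Rightarrow> 'a::real_normed_vector"
  assumes "\<And>i j. (norm (zs i - zs j))\<^sup>2 \<le> \<delta> i + \<delta> j" and "\<delta> \<longlonglongrightarrow> 0"
  shows "Cauchy zs"
proof (rule CauchyI)
  fix e :: real
  assume "0 < e"
  then obtain N where N: "\<And>n. N \<le> n \<Longrightarrow> \<bar>\<delta> n\<bar> < e\<^sup>2 / 2"
    using LIMSEQ_D[OF assms(2), of "e\<^sup>2 / 2"] by auto
  have "norm (zs i - zs j) < e" if "N \<le> i" "N \<le> j" for i j
  proof -
    have "(norm (zs i - zs j))\<^sup>2 < e\<^sup>2"
      using assms(1)[of i j] N[OF \<open>N \<le> i\<close>] N[OF \<open>N \<le> j\<close>] by linarith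
    then show ?thesis
      using \<open>0 < e\<close> by (simp add: power_less_imp_less_base)
  qed
  then show "\<exists>N. \<forall>i\<ge>N. \<forall>j\<ge>N. norm (zs i - zs j) < e"
    by blast
qed

lemma strongly_midpoint_convex_attains_Inf:
  fixes g :: "'a::{real_normed_vector, complete_space} \<Rightarrow> real"
  assumes "D \<noteq> {}" and bounded: "bdd_below (g ` D)"
    and midpoint: "\<And>a b. a \<in> D \<Longrightarrow> b \<in> D \<Longrightarrow>
      midpoint a b \<in> D \<and> g (midpoint a b) \<le> (g a + g b) / 2 - (norm (a - b))\<^sup>2 / 8"
    and lsc: "\<And>zs z c. (\<And>n. zs n \<in> D) \<Longrightarrow> zs \<longlonglongrightarrow> z \<Longrightarrow> (\<lambda>n. g (zs n)) \<longlonglongrightarrow> c \<Longrightarrow>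
      z \<in> D \<and> g z \<le> c"
  shows "\<exists>z\<in>D. \<forall>w\<in>D. g z \<le> g w"
proof -
  define m where "m = Inf (g ` D)"
  have m_le: "m \<le> g w" if "w \<in> D" for w
    unfolding m_def using bounded that by (simp add: cInf_lower)
  have "m \<in> closure (g ` D)"
    unfolding m_def using assms(1) bounded by (simp add: closure_contains_Inf)
  then obtain ws where ws: "\<And>n. ws n \<in> g ` D" "ws \<longlonglongrightarrow> m"
    unfolding closure_sequential by blast
  then have "\<forall>n. \<exists>z. z \<in> D \<and> ws n = g z"
    by blast
  then obtain zs where zs: "\<And>n. zs n \<in> D" and ws_eq: "\<And>n. ws n = g (zs n)"
    by metis
  have g_zs: "(\<lambda>n. g (zs n)) \<longlonglongrightarrow> m"
    using ws(2) by (simp add: ws_eq[symmetric])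
  have "(norm (zs i - zs j))\<^sup>2 \<le> 4 * (g (zs i) - m) + 4 * (g (zs j) - m)" for i j
  proof -
    have mid: "midpoint (zs i) (zs j) \<in> D"
      and "g (midpoint (zs i) (zs j)) \<le> (g (zs i) + g (zs j)) / 2 - (norm (zs i - zs j))\<^sup>2 / 8"
      using midpoint[OF zs zs] by auto
    with m_le[OF mid] show ?thesis
      by argo
  qed
  moreover have "(\<lambda>n. 4 * (g (zs n) - m)) \<longlonglongrightarrow> 0"
    using tendsto_mult_left[OF LIM_zero[OF g_zs], of 4] by simp
  ultimately have "Cauchy zs"
    by (rule Cauchy_if_norm_diff_sq_le)
  then obtain z where "zs \<longlonglongrightarrow> z"
    using Cauchy_convergent_iff convergent_def by blast
  then have "z \<in> D \<and> g z \<le> m"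
    using lsc zs g_zs by blast
  then show ?thesis
    using m_le by (blast intro: order_trans)
qed

lemma power2_norm_midpoint:
  fixes a b :: "'a::real_inner"
  shows "(norm (midpoint a b))\<^sup>2 = ((norm a)\<^sup>2 + (norm b)\<^sup>2) / 2 - (norm (a - b))\<^sup>2 / 4"
  unfolding midpoint_def power2_norm_eq_inner
  by (simp add: inner_add inner_diff inner_commute field_simps)

lemma power2_norm_convex_combination:
  fixes a b :: "'a::real_inner"
  shows "(norm ((1 - t) *\<^sub>R a + t *\<^sub>R b))\<^sup>2 =
    (norm a)\<^sup>2 + 2 * t * (a \<bullet> (b - a)) + t\<^sup>2 * (norm (b - a))\<^sup>2"
  unfolding power2_norm_eq_inner
  by (simp add: inner_commute algebra_simps power2_eq_square)

lemma fitzpatrick_plus_half_norm_sq_attains_min: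
  fixes S :: "('a::{real_inner, complete_space} \<times> 'a) set"
  assumes S: "maximal_monotone_set S"
  shows "\<exists>z\<in>fitzpatrick_dom S. \<forall>w\<in>fitzpatrick_dom S.
    fitzpatrick S z + (norm z)\<^sup>2 / 2 \<le> fitzpatrick S w + (norm w)\<^sup>2 / 2"
proof (rule strongly_midpoint_convex_attains_Inf)
  have "S \<noteq> {}"
    using S by (rule maximal_monotone_set_nonempty)
  then show "fitzpatrick_dom S \<noteq> {}"
    using fitzpatrick_le_inner[OF maximal_monotone_set_imp_monotone_set[OF S]] by blast
  have "0 \<le> fitzpatrick S z + (norm z)\<^sup>2 / 2" if "z \<in> fitzpatrick_dom S" for z
  proof -
    have "0 \<le> (norm (fst z + snd z))\<^sup>2 / 2"
      by simp
    also have "\<dots> = fst z \<bullet> snd z + (norm z)\<^sup>2 / 2"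
      by (cases z) (simp add: power2_norm_eq_inner inner_add inner_commute)
    also have "\<dots> \<le> fitzpatrick S z + (norm z)\<^sup>2 / 2"
      using fitzpatrick_ge_inner[OF S that] by simp
    finally show ?thesis .
  qed
  then show "bdd_below ((\<lambda>z. fitzpatrick S z + (norm z)\<^sup>2 / 2) ` fitzpatrick_dom S)"
    by (rule bdd_belowI2)
  fix a b
  assume "a \<in> fitzpatrick_dom S" "b \<in> fitzpatrick_dom S"
  moreover have "midpoint a b = (1 - 1 / 2) *\<^sub>R a + (1 / 2) *\<^sub>R b"
    by (simp add: midpoint_def scaleR_add_right)
  ultimately have "midpoint a b \<in> fitzpatrick_dom S"
    and "fitzpatrick S (midpoint a b) \<le> (fitzpatrick S a + fitzpatrick S b) / 2"
    using fitzpatrick_convex[OF \<open>S \<noteq> {}\<close>, of a b "1 / 2"] by simp_all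
  then show "midpoint a b \<in> fitzpatrick_dom S \<and>
    fitzpatrick S (midpoint a b) + (norm (midpoint a b))\<^sup>2 / 2 \<le>
      (fitzpatrick S a + (norm a)\<^sup>2 / 2 + (fitzpatrick S b + (norm b)\<^sup>2 / 2)) / 2 -
      (norm (a - b))\<^sup>2 / 8"
    unfolding power2_norm_midpoint by (simp add: field_simps)
next
  fix zs z c
  assume zs: "\<And>n. zs n \<in> fitzpatrick_dom S" and "zs \<longlonglongrightarrow> z"
    and "(\<lambda>n. fitzpatrick S (zs n) + (norm (zs n))\<^sup>2 / 2) \<longlonglongrightarrow> c"
  then have "(\<lambda>n. fitzpatrick S (zs n) + (norm (zs n))\<^sup>2 / 2 - (norm (zs n))\<^sup>2 / 2)
      \<longlonglongrightarrow> c - (norm z)\<^sup>2 / 2"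
    by (intro tendsto_intros) auto
  then have "z \<in> fitzpatrick_dom S \<and> fitzpatrick S z \<le> c - (norm z)\<^sup>2 / 2"
    using fitzpatrick_lower_semicontinuous[OF maximal_monotone_set_nonempty[OF S] zs \<open>zs \<longlonglongrightarrow> z\<close>]
    by simp
  then show "z \<in> fitzpatrick_dom S \<and> fitzpatrick S z + (norm z)\<^sup>2 / 2 \<le> c"
    by simp
qed

lemma fitzpatrick_minimizer_variational_inequality:
  assumes "monotone_set S" and z: "z \<in> fitzpatrick_dom S"
    and min: "\<And>w. w \<in> fitzpatrick_dom S \<Longrightarrow>
      fitzpatrick S z + (norm z)\<^sup>2 / 2 \<le> fitzpatrick S w + (norm w)\<^sup>2 / 2"
    and "p \<in> S"
  shows "fitzpatrick S z \<le> fst p \<bullet> snd p + z \<bullet> (p - z)"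
proof -
  have p: "p \<in> fitzpatrick_dom S" "fitzpatrick S p \<le> fst p \<bullet> snd p"
    using fitzpatrick_le_inner[OF assms(1,4)] by simp_all
  have "fitzpatrick S z \<le> fst p \<bullet> snd p + z \<bullet> (p - z) + t * (norm (p - z))\<^sup>2 / 2"
    if t: "0 < t" "t \<le> 1" for t
  proof -
    let ?w = "(1 - t) *\<^sub>R z + t *\<^sub>R p"
    have "?w \<in> fitzpatrick_dom S" and "fitzpatrick S ?w \<le> (1 - t) * fitzpatrick S z + t * fitzpatrick S p"
      using fitzpatrick_convex[of S z p t] z p t \<open>p \<in> S\<close> by auto
    moreover have "t * fitzpatrick S p \<le> t * (fst p \<bullet> snd p)"
      using p t by simp
    ultimately have "fitzpatrick S z + (norm z)\<^sup>2 / 2 \<le>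
        (1 - t) * fitzpatrick S z + t * (fst p \<bullet> snd p) + (norm ?w)\<^sup>2 / 2"
      using min by fastforce
    then have "t * fitzpatrick S z \<le>
        t * (fst p \<bullet> snd p + z \<bullet> (p - z) + t * (norm (p - z))\<^sup>2 / 2)"
      unfolding power2_norm_convex_combination by (simp add: field_simps power2_eq_square)
    then show ?thesis
      using t by simp
  qed
  then have "\<forall>\<^sub>F t in at_right 0.
      fitzpatrick S z \<le> fst p \<bullet> snd p + z \<bullet> (p - z) + t * (norm (p - z))\<^sup>2 / 2"
    using eventually_at_right_real[of 0 1] by (auto elim!: eventually_mono)
  moreover have "((\<lambda>t. fst p \<bullet> snd p + z \<bullet> (p - z) + t * (norm (p - z))\<^sup>2 / 2) \<longlongrightarrow>
      fst p \<bullet> snd p + z \<bullet> (p - z) + 0 * (norm (p - z))\<^sup>2 / 2) (at_right 0)"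
    by (intro tendsto_intros) simp
  ultimately show ?thesis
    by (intro tendsto_lowerbound) auto
qed

lemma maximal_monotone_set_ex_add_eq_0:
  fixes S :: "('a::{real_inner, complete_space} \<times> 'a) set"
  assumes S: "maximal_monotone_set S"
  shows "\<exists>x u. (x, u) \<in> S \<and> x + u = 0"
proof -
  obtain x u where xu: "(x, u) \<in> fitzpatrick_dom S"
    and "\<forall>w\<in>fitzpatrick_dom S.
      fitzpatrick S (x, u) + (norm (x, u))\<^sup>2 / 2 \<le> fitzpatrick S w + (norm w)\<^sup>2 / 2"
    using fitzpatrick_plus_half_norm_sq_attains_min[OF S] by auto
  then have variational: "fitzpatrick S (x, u) \<le> y \<bullet> v + (x, u) \<bullet> ((y, v) - (x, u))"
    if "(y, v) \<in> S" for y v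
    using fitzpatrick_minimizer_variational_inequality[OF maximal_monotone_set_imp_monotone_set[OF S]]
      that by fastforce
  have related: "(x + u) \<bullet> (x + u) \<le> (- u - y) \<bullet> (- x - v)" if "(y, v) \<in> S" for y v
    using variational[OF that] fitzpatrick_ge_inner[OF S xu]
    by (simp add: inner_commute algebra_simps)
  have "(- u, - x) \<in> S"
  proof (rule maximal_monotone_setD[OF S])
    fix y v
    assume "(y, v) \<in> S"
    then show "0 \<le> (- u - y) \<bullet> (- x - v)"
      using related[of y v] inner_ge_zero[of "x + u"] by linarith
  qed
  then have "x + u = 0"
    using related[of "- u" "- x"] by (simp flip: power2_norm_eq_inner)
  then have "- u + - x = 0"
    by (metis add.commute minus_add_distrib neg_0_equal_iff_equal)
  with \<open>(- u, - x) \<in> S\<close> show ?thesis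
    by blast
qed

lemma minty_surjective:
  fixes S :: "('a::{real_inner, complete_space} \<times> 'a) set"
  assumes "maximal_monotone_set S" "0 < \<gamma>"
  shows "\<exists>p\<in>S. fst p + \<gamma> *\<^sub>R snd p = w"
proof -
  obtain x u where "(x, u) \<in> (\<lambda>(x, u). (x - w, \<gamma> *\<^sub>R u)) ` S" "x + u = 0"
    using maximal_monotone_set_ex_add_eq_0[OF maximal_monotone_set_shift_scale[OF assms]] by blast
  then show ?thesis
    by (force simp: algebra_simps)
qed

lemma resolvent_nonexpansive:
  assumes "monotone_set S" "0 \<le> \<gamma>" "p \<in> S" "q \<in> S"
  shows "norm (fst p - fst q) \<le> norm ((fst p + \<gamma> *\<^sub>R snd p) - (fst q + \<gamma> *\<^sub>R snd q))"
proof -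
  let ?d = "fst p - fst q" and ?e = "snd p - snd q"
  have "0 \<le> 2 * \<gamma> * (?d \<bullet> ?e) + \<gamma>\<^sup>2 * (?e \<bullet> ?e)"
    using assms monotone_setD[of S "fst p" "snd p" "fst q" "snd q"] by simp
  then have "?d \<bullet> ?d \<le> (?d + \<gamma> *\<^sub>R ?e) \<bullet> (?d + \<gamma> *\<^sub>R ?e)"
    by (simp add: inner_commute power2_eq_square algebra_simps)
  then show ?thesis
    by (simp add: norm_le algebra_simps)
qed

section \<open>Strongly dissipative operators\<close>

lemma power2_norm_add_scaleR_dissipative_le:
  fixes Q :: "'a::real_inner \<Rightarrow> 'a"
  assumes "0 \<le> \<gamma>" "d \<bullet> Q d + lam * (norm d)\<^sup>2 \<le> 0" "norm (Q d) \<le> L * norm d"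
  shows "(norm (d + \<gamma> *\<^sub>R Q d))\<^sup>2 \<le> (1 - 2 * \<gamma> * lam + \<gamma>\<^sup>2 * L\<^sup>2) * (norm d)\<^sup>2"
proof -
  have "2 * \<gamma> * (d \<bullet> Q d) \<le> 2 * \<gamma> * (- lam * (norm d)\<^sup>2)"
    using assms(1,2) by (intro mult_left_mono) auto
  moreover have "\<gamma>\<^sup>2 * (norm (Q d))\<^sup>2 \<le> \<gamma>\<^sup>2 * (L * norm d)\<^sup>2"
    using assms(3) by (simp add: mult_left_mono power_mono)
  moreover have "(norm (d + \<gamma> *\<^sub>R Q d))\<^sup>2 =
      (norm d)\<^sup>2 + 2 * \<gamma> * (d \<bullet> Q d) + \<gamma>\<^sup>2 * (norm (Q d))\<^sup>2"
    unfolding power2_norm_eq_inner by (simp add: inner_commute algebra_simps power2_eq_square)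
  ultimately have "(norm (d + \<gamma> *\<^sub>R Q d))\<^sup>2 \<le>
      (norm d)\<^sup>2 + 2 * \<gamma> * (- lam * (norm d)\<^sup>2) + \<gamma>\<^sup>2 * (L * norm d)\<^sup>2"
    by linarith
  also have "\<dots> = (1 - 2 * \<gamma> * lam + \<gamma>\<^sup>2 * L\<^sup>2) * (norm d)\<^sup>2"
    by (simp add: algebra_simps power2_eq_square)
  finally show ?thesis .
qed

lemma strongly_dissipative_ex_contraction:
  fixes Q :: "'a::real_inner \<Rightarrow> 'a"
  assumes "bounded_linear Q" "0 < lam" "\<And>y. y \<bullet> Q y + lam * (norm y)\<^sup>2 \<le> 0"
  shows "\<exists>\<gamma>>0. \<exists>c. 0 \<le> c \<and> c < 1 \<and> (\<forall>d. norm (d + \<gamma> *\<^sub>R Q d) \<le> c * norm d)"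
proof -
  obtain K where "0 < K" and K: "\<And>x. norm (Q x) \<le> norm x * K"
    using bounded_linear.pos_bounded[OF assms(1)] by blast
  \<comment> \<open>Enlarging the bound gives \<open>lam < L\<close> even when the space is trivial.\<close>
  define L where "L = K + lam"
  have L: "0 < L" "lam < L"
    using \<open>0 < K\<close> \<open>0 < lam\<close> by (auto simp: L_def)
  have L_bound: "norm (Q x) \<le> L * norm x" for x
  proof -
    have "norm (Q x) \<le> K * norm x + lam * norm x"
      using K[of x] \<open>0 < lam\<close> by (simp add: mult.commute add_increasing2)
    then show ?thesis
      by (simp add: L_def distrib_right)
  qed
  define \<gamma> where "\<gamma> = lam / L\<^sup>2"
  define c where "c = sqrt (1 - (lam / L)\<^sup>2)"
  have ratio: "0 < (lam / L)\<^sup>2" "(lam / L)\<^sup>2 < 1"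
    using L \<open>0 < lam\<close> by (auto simp: abs_square_less_1)
  have "norm (d + \<gamma> *\<^sub>R Q d) \<le> c * norm d" for d
  proof -
    have "(norm (d + \<gamma> *\<^sub>R Q d))\<^sup>2 \<le> (1 - 2 * \<gamma> * lam + \<gamma>\<^sup>2 * L\<^sup>2) * (norm d)\<^sup>2"
      using L \<open>0 < lam\<close> assms(3) L_bound
      by (intro power2_norm_add_scaleR_dissipative_le) (auto simp: \<gamma>_def)
    also have "\<dots> = (1 - (lam / L)\<^sup>2) * (norm d)\<^sup>2"
      using L by (simp add: \<gamma>_def field_simps power2_eq_square)
    finally have "norm (d + \<gamma> *\<^sub>R Q d) \<le> sqrt ((1 - (lam / L)\<^sup>2) * (norm d)\<^sup>2)"
      by (rule real_le_rsqrt)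
    also have "\<dots> = c * norm d"
      by (simp add: c_def real_sqrt_mult)
    finally show ?thesis .
  qed
  moreover have "0 < \<gamma>" "0 \<le> c" "c < 1"
    using L ratio \<open>0 < lam\<close> by (auto simp: \<gamma>_def c_def)
  ultimately show ?thesis
    by blast
qed

lemma maximal_monotone_set_meets_strongly_dissipative_graph:
  fixes S :: "('a::{real_inner, complete_space} \<times> 'a) set"
  assumes S: "maximal_monotone_set S" and Q: "bounded_linear Q" and "0 < lam"
    and "\<And>y. y \<bullet> Q y + lam * (norm y)\<^sup>2 \<le> 0"
  shows "\<exists>y. (y, Q y) \<in> S"
proof -
  obtain \<gamma> c where "0 < \<gamma>" "0 \<le> c" "c < 1"
    and contraction: "\<And>d. norm (d + \<gamma> *\<^sub>R Q d) \<le> c * norm d"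
    using strongly_dissipative_ex_contraction[OF assms(2-)] by blast
  define R where "R w = (SOME p. p \<in> S \<and> fst p + \<gamma> *\<^sub>R snd p = w)" for w
  have R: "R w \<in> S" "fst (R w) + \<gamma> *\<^sub>R snd (R w) = w" for w
    using someI_ex[OF minty_surjective[OF S \<open>0 < \<gamma>\<close>, of w, unfolded Bex_def]]
    unfolding R_def by auto
  define T where "T y = fst (R (y + \<gamma> *\<^sub>R Q y))" for y
  have "dist (T x) (T y) \<le> c * dist x y" for x y
  proof -
    have "dist (T x) (T y) \<le> norm ((x + \<gamma> *\<^sub>R Q x) - (y + \<gamma> *\<^sub>R Q y))"
      using resolvent_nonexpansive[OF maximal_monotone_set_imp_monotone_set[OF S]
          less_imp_le[OF \<open>0 < \<gamma>\<close>] R(1) R(1)]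
      unfolding dist_norm T_def R(2) .
    also have "(x + \<gamma> *\<^sub>R Q x) - (y + \<gamma> *\<^sub>R Q y) = (x - y) + \<gamma> *\<^sub>R Q (x - y)"
      using Q by (simp add: linear_simps algebra_simps)
    finally show ?thesis
      using contraction[of "x - y"] by (simp add: dist_norm)
  qed
  then obtain y where "T y = y"
    using banach_fix_type[OF \<open>0 \<le> c\<close> \<open>c < 1\<close>] by blast
  then have "R (y + \<gamma> *\<^sub>R Q y) = (y, Q y)"
    using R(2)[of "y + \<gamma> *\<^sub>R Q y"] \<open>0 < \<gamma>\<close> unfolding T_def by (simp add: prod_eq_iff)
  then show ?thesis
    using R(1) by metis
qed

lemma monotone_set_strongly_dissipative_graph_unique:
  assumes "monotone_set S" "linear Q" "0 < lam" "\<And>y. y \<bullet> Q y + lam * (norm y)\<^sup>2 \<le> 0"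
    and "(x, Q x) \<in> S" "(y, Q y) \<in> S"
  shows "x = y"
proof -
  have "0 \<le> (x - y) \<bullet> (Q x - Q y)"
    using monotone_setD[OF assms(1,5,6)] .
  also have "\<dots> = (x - y) \<bullet> Q (x - y)"
    using assms(2) by (simp add: linear_diff)
  also have "\<dots> \<le> - lam * (norm (x - y))\<^sup>2"
    using assms(4)[of "x - y"] by simp
  finally have "(norm (x - y))\<^sup>2 \<le> 0"
    using \<open>0 < lam\<close> by (simp add: mult_le_0_iff)
  then show ?thesis
    by simp
qed

theorem corollary2p8:
  fixes Q :: "'a::{real_inner, complete_space} \<Rightarrow> 'a" and lam :: real
  assumes "bounded_linear Q"
    and "lam > 0"
    and "\<And>y. y \<bullet> Q y + lam * (norm y)\<^sup>2 \<le> 0"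
  shows "\<forall>M. maximally_monotone M \<longrightarrow> (\<exists>p. graph M \<inter> graph (\<lambda>y. {Q y}) = {p})"
proof (intro allI impI)
  fix M :: "'a \<Rightarrow> 'a set"
  assume "maximally_monotone M"
  then have S: "maximal_monotone_set (graph M)"
    by (rule maximal_monotone_set_graph)
  obtain y where "(y, Q y) \<in> graph M"
    using maximal_monotone_set_meets_strongly_dissipative_graph[OF S assms] by blast
  moreover have "x = y" if "(x, Q x) \<in> graph M" for x
    using monotone_set_strongly_dissipative_graph_unique[OF maximal_monotone_set_imp_monotone_set[OF S]
        bounded_linear.linear[OF assms(1)] assms(2,3) that \<open>(y, Q y) \<in> graph M\<close>] .
  moreover have "graph M \<inter> graph (\<lambda>y. {Q y}) = {(x, Q x) | x. (x, Q x) \<in> graph M}"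
    unfolding graph_def by auto
  ultimately have "graph M \<inter> graph (\<lambda>y. {Q y}) = {(y, Q y)}"
    by blast
  then show "\<exists>p. graph M \<inter> graph (\<lambda>y. {Q y}) = {p}"
    by blast
qed

end
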